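(* (1) A geodesic metric space is $(L,C)$-quasi-isometric to a countable simplicial tree for some $L\geqslant 1$, $C\geqslant 0$ if and only if it is $(1,C')$-quasi-isometric to a countable simplicial tree for some $C'\geqslant 0$. (2) A geodesic metric space is $(L,C)$-quasi-isometric to a locally finite simplicial tree for some $L\geqslant 1$, $C\geqslant 0$ if and only if it is $(1,C')$-quasi-isometric to a locally finite simplicial tree for some $C'\geqslant 0$.
   Context: An $(L,C)$-quasi-isometry $f:(X,d_X)\to(Y,d_Y)$ satisfies $\frac1L d_X(a,b)-C\leqslant d_Y(f(a),f(b))\leqslant Ld_X(a,b)+C$ for all $a,b$, and every point of $Y$ is within distance $C$ of $f(X)$. A simplicial tree is a 1-dimensional simplicial complex which is an $\mathbb{R}$-tree for the path metric in which each edge has length 1; it is countable if it has countably many vertices, and locally finite if every vertex has finitely many neighbours. *)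

theory Defs
  imports "HOL-Analysis.Analysis"
begin

definition geodesic_metric_space :: "'a set \<Rightarrow> ('a \<Rightarrow> 'a \<Rightarrow> real) \<Rightarrow> bool" where
  "geodesic_metric_space X d \<longleftrightarrow> Metric_space X d \<and>
     (\<forall>x\<in>X. \<forall>y\<in>X. \<exists>g :: real \<Rightarrow> 'a.
        g 0 = x \<and> g (d x y) = y \<and> g ` {0..d x y} \<subseteq> X \<and>
        (\<forall>s\<in>{0..d x y}. \<forall>t\<in>{0..d x y}. d (g s) (g t) = \<bar>s - t\<bar>))"

definition quasi_isometry ::
  "real \<Rightarrow> real \<Rightarrow> 'a set \<Rightarrow> ('a \<Rightarrow> 'a \<Rightarrow> real) \<Rightarrow> 'b set \<Rightarrow> ('b \<Rightarrow> 'b \<Rightarrow> real)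
   \<Rightarrow> ('a \<Rightarrow> 'b) \<Rightarrow> bool" where
  "quasi_isometry L C X dX Y dY f \<longleftrightarrow>
     f ` X \<subseteq> Y \<and>
     (\<forall>a\<in>X. \<forall>b\<in>X. dX a b / L - C \<le> dY (f a) (f b) \<and> dY (f a) (f b) \<le> L * dX a b + C) \<and>
     (\<forall>y\<in>Y. \<exists>x\<in>X. dY y (f x) \<le> C)"

definition gdist :: "(nat \<Rightarrow> nat \<Rightarrow> bool) \<Rightarrow> nat \<Rightarrow> nat \<Rightarrow> nat" where
  "gdist E x y = (LEAST n. (E ^^ n) x y)"

definition simplicial_tree :: "nat set \<Rightarrow> (nat \<Rightarrow> nat \<Rightarrow> bool) \<Rightarrow> bool" where
  "simplicial_tree V E \<longleftrightarrow>
     V \<noteq> {} \<and>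
     (\<forall>x y. E x y \<longrightarrow> x \<in> V \<and> y \<in> V \<and> E y x \<and> x \<noteq> y) \<and>
     (\<forall>x\<in>V. \<forall>y\<in>V. \<exists>n. (E ^^ n) x y) \<and>
     \<not> (\<exists>xs. 3 \<le> length xs \<and> distinct xs \<and>
           (\<forall>i. Suc i < length xs \<longrightarrow> E (xs ! i) (xs ! Suc i)) \<and> E (last xs) (hd xs))"

definition locally_finite_graph :: "nat set \<Rightarrow> (nat \<Rightarrow> nat \<Rightarrow> bool) \<Rightarrow> bool" where
  "locally_finite_graph V E \<longleftrightarrow> (\<forall>v\<in>V. finite {w. E v w})"

text \<open>A point is either a
vertex v, encoded (v,v,0), or an interior point of the edge {a,b} with a < b at distance
t \<in> (0,1) from a, encoded (a,b,t).\<close>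
definition tree_points :: "nat set \<Rightarrow> (nat \<Rightarrow> nat \<Rightarrow> bool) \<Rightarrow> (nat \<times> nat \<times> real) set" where
  "tree_points V E = {(v, v, 0) | v. v \<in> V} \<union> {(a, b, t) | a b t. E a b \<and> a < b \<and> 0 < t \<and> t < 1}"

definition tree_ends :: "nat \<times> nat \<times> real \<Rightarrow> (nat \<times> real) set" where
  "tree_ends p = (case p of (a, b, t) \<Rightarrow> if a = b then {(a, 0)} else {(a, t), (b, 1 - t)})"

text \<open>The path metric of the realisation (edges of length 1); in a tree this is given
by going straight along a common edge, or else through endpoints of the cells.\<close>
definition tree_dist :: "(nat \<Rightarrow> nat \<Rightarrow> bool) \<Rightarrow> nat \<times> nat \<times> real \<Rightarrow> nat \<times> nat \<times> real \<Rightarrow> real" where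
  "tree_dist E p q = (case p of (a, b, t) \<Rightarrow> case q of (a', b', t') \<Rightarrow>
     if a \<noteq> b \<and> a = a' \<and> b = b' then \<bar>t - t'\<bar>
     else Min {s + real (gdist E x y) + r | x s y r. (x, s) \<in> tree_ends p \<and> (y, r) \<in> tree_ends q})"

end

theory Submission
  imports Defs "HOL-Library.Transitive_Closure_Table"
begin

text \<open>Only the passage from \<open>(L, C)\<close> to \<open>(1, C')\<close> needs work.  Let \<open>f\<close> be an
  \<open>(L, C)\<close>-quasi-isometry from \<open>X\<close> to a tree \<open>T\<close>, fix a base point and let \<open>height\<close> be the
  distance to it.  For each \<open>n\<close>, split the superlevel set \<open>{height \<ge> n}\<close> into the classes of
  points joined by chains with steps of bounded length.  These classes, each linked to the class
  containing it one level below, form a tree \<open>T'\<close>, and sending \<open>x\<close> to its class at level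
  \<open>\<lfloor>height x\<rfloor>\<close> is a \<open>(1, C')\<close>-quasi-isometry: \<open>d x y\<close> is, up to an additive constant,
  \<open>height x + height y - 2 l\<close> for the largest level \<open>l\<close> at which \<open>x\<close> and \<open>y\<close> are chained.
  The upper bound needs that two chained points of a class at level \<open>n\<close> have uniformly close radial
  projections to the sphere of radius \<open>n\<close>; this is where \<open>T\<close> is used, since a vertex in the
  middle of a long geodesic of \<open>T\<close> separates it and every chain must pass near it.  Classes are
  encoded by the level and the \<open>f\<close>-image of a representative, so \<open>T'\<close> has natural numbers as
  vertices (hence is countable) and is locally finite when \<open>T\<close> is.\<close>

section \<open>Walks in graphs\<close>

lemma relpowp_sym:
  assumes "symp E" and "(E ^^ n) x y"
  shows "(E ^^ n) y x"
  using assms(2)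
proof (induction n arbitrary: y)
  case 0
  then show ?case by simp
next
  case (Suc n)
  from Suc.prems obtain z where "(E ^^ n) x z" "E z y" by (rule relpowp_Suc_E)
  then show ?case using Suc.IH assms(1) relpowp_Suc_I2 by (metis sympD)
qed

lemma rtrancl_path_iff_successively:
  "rtrancl_path r x xs y \<longleftrightarrow> successively r (x # xs) \<and> last (x # xs) = y"
proof (induction xs arbitrary: x)
  case Nil
  then show ?case by (auto elim: rtrancl_path.cases intro: rtrancl_path.base)
next
  case (Cons z zs)
  then show ?case by (auto elim: rtrancl_path.cases intro: rtrancl_path.step)
qed

lemma rtranclp_crossing:
  "R\<^sup>*\<^sup>* x y \<Longrightarrow> Q x \<Longrightarrow> \<not> Q y \<Longrightarrow> \<exists>u w. R u w \<and> Q u \<and> \<not> Q w"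
  by (induction rule: rtranclp_induct) auto

definition del_edge :: "('a \<Rightarrow> 'a \<Rightarrow> bool) \<Rightarrow> 'a \<Rightarrow> 'a \<Rightarrow> 'a \<Rightarrow> 'a \<Rightarrow> bool" where
  "del_edge E u u' v w \<longleftrightarrow> E v w \<and> {v, w} \<noteq> {u, u'}"

lemma del_edge_commute: "del_edge E u u' = del_edge E u' u"
  unfolding del_edge_def by (intro ext) (simp add: insert_commute)

lemma symp_del_edge: "symp E \<Longrightarrow> symp (del_edge E u u')"
  unfolding del_edge_def by (auto intro!: sympI dest: sympD simp: insert_commute)

lemma relpowp_avoiding_imp_del_edge:
  assumes "(E ^^ n) x y" and "\<And>i. i \<le> n \<Longrightarrow> \<not> (E ^^ i) x u"
  shows "(del_edge E u u')\<^sup>*\<^sup>* x y"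
  using assms
proof (induction n arbitrary: y)
  case 0
  then show ?case by simp
next
  case (Suc n)
  from Suc.prems(1) obtain z where z: "(E ^^ n) x z" "E z y" by (rule relpowp_Suc_E)
  have "z \<noteq> u" using Suc.prems(2)[of n] z(1) by auto
  moreover have "y \<noteq> u" using Suc.prems(2)[of "Suc n"] Suc.prems(1) by auto
  ultimately have "del_edge E u u' z y" using z(2) by (auto simp: del_edge_def doubleton_eq_iff)
  moreover have "(del_edge E u u')\<^sup>*\<^sup>* x z" using Suc.IH[OF z(1)] Suc.prems(2) by simp
  ultimately show ?case by (rule rtranclp.rtrancl_into_rtrancl[rotated])
qed

section \<open>Simplicial trees\<close>

lemma gdist_le: "(E ^^ n) x y \<Longrightarrow> gdist E x y \<le> n"
  unfolding gdist_def by (rule Least_le)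

lemma gdist_self [simp]: "gdist E x x = 0"
  using gdist_le[where n = 0 and E = E and x = x and y = x] by simp

lemma gdist_edge: "E x y \<Longrightarrow> gdist E x y \<le> 1"
  by (metis gdist_le relpowp_1)

lemma tree_dist_vertices: "tree_dist E (v, v, 0) (w, w, 0) = real (gdist E v w)"
proof -
  have "{s + real (gdist E x y) + r | x s y r. (x, s) \<in> {(v, 0::real)} \<and> (y, r) \<in> {(w, 0::real)}}
        = {real (gdist E v w)}" by auto
  then show ?thesis unfolding tree_dist_def tree_ends_def by simp
qed

lemma tree_points_cases:
  assumes "p \<in> tree_points V E"
  obtains (vertex) v where "v \<in> V" "p = (v, v, 0)"
    | (edge) a b t where "E a b" "a < b" "0 < t" "t < 1" "p = (a, b, t)"
  using assms unfolding tree_points_def by blast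

lemma tree_dist_candidates_image:
  "{s + real (gdist E x y) + r | x s y r. (x, s) \<in> A \<and> (y, r) \<in> B}
     = (\<lambda>((x, s), (y, r)). s + real (gdist E x y) + r) ` (A \<times> B)"
  by force

locale tree_graph =
  fixes V :: "nat set" and E :: "nat \<Rightarrow> nat \<Rightarrow> bool"
  assumes tree: "simplicial_tree V E"
begin

lemma edge_in_V: "E x y \<Longrightarrow> x \<in> V" "E x y \<Longrightarrow> y \<in> V"
  and symp_edge: "symp E"
  and edge_irrefl: "E x y \<Longrightarrow> x \<noteq> y"
  using tree unfolding simplicial_tree_def symp_def by blast+

lemma connected: "x \<in> V \<Longrightarrow> y \<in> V \<Longrightarrow> \<exists>n. (E ^^ n) x y"
  using tree unfolding simplicial_tree_def by blast

lemma no_cycle: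
  assumes "3 \<le> length xs" "distinct xs" "successively E xs"
  shows "\<not> E (last xs) (hd xs)"
proof -
  have "\<not> (\<exists>xs. 3 \<le> length xs \<and> distinct xs \<and>
      (\<forall>i. Suc i < length xs \<longrightarrow> E (xs ! i) (xs ! Suc i)) \<and> E (last xs) (hd xs))"
    using tree unfolding simplicial_tree_def by blast
  then show ?thesis using assms unfolding successively_conv_nth by blast
qed

lemma relpowp_in_V: "(E ^^ n) x y \<Longrightarrow> x \<in> V \<Longrightarrow> y \<in> V"
  by (induction n arbitrary: y) (auto elim: relpowp_Suc_E dest: edge_in_V)

lemma gdist_relpowp: "x \<in> V \<Longrightarrow> y \<in> V \<Longrightarrow> (E ^^ gdist E x y) x y"
  unfolding gdist_def using connected by (meson LeastI)

lemma gdist_sym: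
  assumes "x \<in> V" "y \<in> V"
  shows "gdist E x y = gdist E y x"
proof -
  have "gdist E u v \<le> gdist E v u" if "u \<in> V" "v \<in> V" for u v
    using gdist_le relpowp_sym[OF symp_edge gdist_relpowp[OF that(2,1)]] .
  then show ?thesis using assms by (simp add: antisym)
qed

lemma gdist_triangle:
  "x \<in> V \<Longrightarrow> y \<in> V \<Longrightarrow> z \<in> V \<Longrightarrow> gdist E x z \<le> gdist E x y + gdist E y z"
  using gdist_relpowp gdist_le relpowp_trans by metis

lemma del_edge_disconnects:
  assumes "E q p"
  shows "\<not> (del_edge E q p)\<^sup>*\<^sup>* q p"
proof
  assume "(del_edge E q p)\<^sup>*\<^sup>* q p"
  then obtain xs where "rtrancl_path (del_edge E q p) q xs p"
    by (auto simp: rtranclp_eq_rtrancl_path)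
  then obtain ys where ys: "rtrancl_path (del_edge E q p) q ys p" "distinct (q # ys)"
    by (rule rtrancl_path_distinct)
  then have path: "successively (del_edge E q p) (q # ys)" "last (q # ys) = p"
    by (simp_all add: rtrancl_path_iff_successively)
  have "ys \<noteq> []" using path(2) edge_irrefl[OF assms] by auto
  moreover have "ys \<noteq> [p]" using path(1) by (auto simp: del_edge_def)
  ultimately have "3 \<le> length (q # ys)" using path(2) by (cases ys rule: remdups_adj.cases) auto
  moreover have "successively E (q # ys)"
    using path(1) by (rule successively_mono) (simp add: del_edge_def)
  moreover have "E (last (q # ys)) (hd (q # ys))" using path(2) sympD[OF symp_edge assms] by simp
  ultimately show False using no_cycle ys(2) by blast
qed

lemma gdist_split:
  assumes "a \<in> V" "b \<in> V" "j \<le> gdist E a b"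
  obtains p where "p \<in> V" "gdist E a p = j" "gdist E p b = gdist E a b - j"
proof -
  have "(E ^^ (j + (gdist E a b - j))) a b" using gdist_relpowp assms by simp
  then obtain p where p: "(E ^^ j) a p" "(E ^^ (gdist E a b - j)) p b"
    unfolding relpowp_add by blast
  have "p \<in> V" using relpowp_in_V p(1) assms(1) by blast
  moreover have "gdist E a b \<le> gdist E a p + gdist E p b"
    using gdist_triangle assms \<open>p \<in> V\<close> by blast
  ultimately show thesis using that gdist_le[OF p(1)] gdist_le[OF p(2)] assms(3) by force
qed

text \<open>Deleting the last edge \<open>{q, p}\<close> of a geodesic from \<open>a\<close> to \<open>p\<close> separates \<open>a\<close> from
  everything beyond \<open>p\<close>; hence every path leaving the component \<open>S\<close> of \<open>a\<close> passes through \<open>p\<close>.\<close>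
lemma geodesic_vertex_separates:
  assumes aV: "a \<in> V" and bV: "b \<in> V" and pV: "p \<in> V" and "1 \<le> j"
    and ap: "gdist E a p = j" and pb: "gdist E p b = gdist E a b - j" and "j \<le> gdist E a b"
  obtains S where "a \<in> S" "b \<notin> S"
    "\<And>u w. u \<in> S \<Longrightarrow> u \<in> V \<Longrightarrow> w \<in> V \<Longrightarrow> w \<notin> S \<Longrightarrow> gdist E u p \<le> gdist E u w"
proof -
  obtain j' where j': "j = Suc j'" using \<open>1 \<le> j\<close> by (cases j) auto
  have "(E ^^ Suc j') a p" using gdist_relpowp[OF aV pV] ap j' by simp
  then obtain q where q: "(E ^^ j') a q" "E q p" by (rule relpowp_Suc_E)
  have qV: "q \<in> V" using q(2) edge_in_V by blast
  have del_sym: "(del_edge E q p)\<^sup>*\<^sup>* x y \<Longrightarrow> (del_edge E q p)\<^sup>*\<^sup>* y x" for x y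
    using sympD[OF symp_rtranclp[OF symp_del_edge[OF symp_edge]]] .
  define S where "S = {v. (del_edge E q p)\<^sup>*\<^sup>* q v}"
  have "\<not> (E ^^ i) a p" if "i \<le> j'" for i
    using gdist_le[where x = a and y = p] that ap j' by fastforce
  then have "(del_edge E q p)\<^sup>*\<^sup>* a q"
    by (rule relpowp_avoiding_imp_del_edge[OF q(1), of p q, unfolded del_edge_commute[of E p q]])
  then have "a \<in> S" unfolding S_def using del_sym by blast
  have "\<not> (E ^^ i) b q" if "i \<le> gdist E a b - j" for i
  proof
    assume "(E ^^ i) b q"
    then have "gdist E q b \<le> gdist E a b - j"
      using gdist_le[OF relpowp_sym[OF symp_edge]] that by (meson le_trans)
    moreover have "gdist E a q \<le> j'" using gdist_le q by blast
    moreover have "gdist E a b \<le> gdist E a q + gdist E q b" using gdist_triangle aV bV qV by blast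
    ultimately show False using j' \<open>j \<le> gdist E a b\<close> by simp
  qed
  moreover have "(E ^^ (gdist E a b - j)) b p"
    using relpowp_sym[OF symp_edge gdist_relpowp[OF pV bV]] pb by simp
  ultimately have "(del_edge E q p)\<^sup>*\<^sup>* b p" by (intro relpowp_avoiding_imp_del_edge)
  then have "b \<notin> S"
    using del_edge_disconnects[OF q(2)] rtranclp_trans[of "del_edge E q p" q b p] unfolding S_def by blast
  have "gdist E u p \<le> gdist E u w" if uw: "u \<in> S" "u \<in> V" "w \<in> V" "w \<notin> S" for u w
  proof (rule ccontr)
    assume "\<not> gdist E u p \<le> gdist E u w"
    then have "\<not> (E ^^ i) u p" if "i \<le> gdist E u w" for i
      using gdist_le[where x = u and y = p] that by fastforce
    then have "(del_edge E q p)\<^sup>*\<^sup>* u w"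
      by (rule relpowp_avoiding_imp_del_edge[OF gdist_relpowp[OF uw(2,3)], of p q,
            unfolded del_edge_commute[of E p q]])
    then show False using uw(1,4) rtranclp_trans[of "del_edge E q p" q u w] unfolding S_def by blast
  qed
  then show thesis using that \<open>a \<in> S\<close> \<open>b \<notin> S\<close> by blast
qed

lemma tree_ends_props:
  assumes "p \<in> tree_points V E"
  shows "finite (tree_ends p)" "\<exists>s. (fst p, s) \<in> tree_ends p \<and> 0 \<le> s \<and> s \<le> 1"
    "\<And>x s. (x, s) \<in> tree_ends p \<Longrightarrow> x \<in> V \<and> 0 \<le> s \<and> gdist E (fst p) x \<le> 1"
    "fst p \<in> V"
proof -
  from assms have "finite (tree_ends p) \<and> (\<exists>s. (fst p, s) \<in> tree_ends p \<and> 0 \<le> s \<and> s \<le> 1) \<and>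
    (\<forall>x s. (x, s) \<in> tree_ends p \<longrightarrow> x \<in> V \<and> 0 \<le> s \<and> gdist E (fst p) x \<le> 1) \<and> fst p \<in> V"
  proof (cases rule: tree_points_cases)
    case (vertex v)
    then show ?thesis by (simp add: tree_ends_def)
  next
    case (edge a b t)
    then show ?thesis
      using edge_in_V[OF edge(1)] gdist_edge[of E a b, OF edge(1)] by (auto simp: tree_ends_def)
  qed
  then show "finite (tree_ends p)" "\<exists>s. (fst p, s) \<in> tree_ends p \<and> 0 \<le> s \<and> s \<le> 1"
    "\<And>x s. (x, s) \<in> tree_ends p \<Longrightarrow> x \<in> V \<and> 0 \<le> s \<and> gdist E (fst p) x \<le> 1"
    "fst p \<in> V" by blast+
qed

lemma Min_tree_ends_approx:
  assumes p: "p \<in> tree_points V E" and q: "q \<in> tree_points V E"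
  defines "SS \<equiv> {s + real (gdist E x y) + r | x s y r. (x, s) \<in> tree_ends p \<and> (y, r) \<in> tree_ends q}"
  shows "\<bar>Min SS - real (gdist E (fst p) (fst q))\<bar> \<le> 2"
proof -
  have fin: "finite SS"
    unfolding SS_def tree_dist_candidates_image using tree_ends_props(1)[OF p] tree_ends_props(1)[OF q] by simp
  obtain s0 where s0: "(fst p, s0) \<in> tree_ends p" "0 \<le> s0" "s0 \<le> 1"
    using tree_ends_props(2)[OF p] by blast
  obtain r0 where r0: "(fst q, r0) \<in> tree_ends q" "0 \<le> r0" "r0 \<le> 1"
    using tree_ends_props(2)[OF q] by blast
  have "s0 + real (gdist E (fst p) (fst q)) + r0 \<in> SS" unfolding SS_def using s0 r0 by blast
  then have upper: "Min SS \<le> real (gdist E (fst p) (fst q)) + 2"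
    using Min_le[OF fin] s0 r0 by fastforce
  have "Min SS \<in> SS" using Min_in[OF fin] \<open>_ \<in> SS\<close> by blast
  then obtain x s y r where xsyr: "Min SS = s + real (gdist E x y) + r"
    "(x, s) \<in> tree_ends p" "(y, r) \<in> tree_ends q"
    unfolding SS_def by blast
  have x: "x \<in> V" "0 \<le> s" "gdist E (fst p) x \<le> 1" using tree_ends_props(3)[OF p xsyr(2)] by auto
  have y: "y \<in> V" "0 \<le> r" "gdist E (fst q) y \<le> 1" using tree_ends_props(3)[OF q xsyr(3)] by auto
  have fV: "fst p \<in> V" "fst q \<in> V" using tree_ends_props(4) p q by auto
  have "gdist E (fst p) (fst q) \<le> gdist E (fst p) x + gdist E x y + gdist E y (fst q)"
    using gdist_triangle fV x y by (meson add_le_mono le_trans order_refl)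
  moreover have "gdist E y (fst q) = gdist E (fst q) y" using gdist_sym fV y by simp
  ultimately have "real (gdist E (fst p) (fst q)) \<le> Min SS + 2" using xsyr(1) x y by linarith
  then show ?thesis using upper by linarith
qed

lemma tree_dist_fst_approx:
  assumes p: "p \<in> tree_points V E" and q: "q \<in> tree_points V E"
  shows "\<bar>tree_dist E p q - real (gdist E (fst p) (fst q))\<bar> \<le> 2"
proof -
  obtain a b t where pe: "p = (a, b, t)" by (cases p) auto
  obtain a' b' t' where qe: "q = (a', b', t')" by (cases q) auto
  show ?thesis
  proof (cases "a \<noteq> b \<and> a = a' \<and> b = b'")
    case True
    then have "tree_dist E p q = \<bar>t - t'\<bar>" unfolding tree_dist_def pe qe by simp
    moreover have "0 < t \<and> t < 1" "0 < t' \<and> t' < 1"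
      using p q True unfolding pe qe tree_points_def by auto
    ultimately show ?thesis using True pe qe by (auto simp: abs_le_iff)
  next
    case False
    then have "tree_dist E p q = Min {s + real (gdist E x y) + r | x s y r.
      (x, s) \<in> tree_ends p \<and> (y, r) \<in> tree_ends q}"
      unfolding tree_dist_def pe qe prod.case by (simp only: if_not_P if_False)
    then show ?thesis using Min_tree_ends_approx[OF p q] by simp
  qed
qed

lemma tree_dist_to_fst:
  assumes "p \<in> tree_points V E"
  shows "tree_dist E p (fst p, fst p, 0) \<le> 1"
  using assms
proof (cases rule: tree_points_cases)
  case (vertex v)
  then show ?thesis by (simp add: tree_dist_vertices)
next
  case (edge a b t)
  define SS where "SS = {s + real (gdist E x y) + r | x s y r.
    (x, s) \<in> {(a, t), (b, 1 - t)} \<and> (y, r) \<in> {(a, 0::real)}}"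
  have "a \<noteq> b" using edge(2) by simp
  then have "tree_dist E p (fst p, fst p, 0) = Min SS"
    unfolding tree_dist_def SS_def edge(5) tree_ends_def by simp
  moreover have "finite SS" unfolding SS_def tree_dist_candidates_image by simp
  moreover have "t \<in> SS" unfolding SS_def by force
  ultimately show ?thesis using Min_le[of SS t] edge(4) by linarith
qed

lemma quasi_isometry_fst_bounds:
  assumes qi: "quasi_isometry L C X d (tree_points V E) (tree_dist E) f" and "x \<in> X" "y \<in> X"
  shows "fst (f x) \<in> V" "d x y / L - (C + 2) \<le> real (gdist E (fst (f x)) (fst (f y)))"
    "real (gdist E (fst (f x)) (fst (f y))) \<le> L * d x y + (C + 2)"
proof -
  have fx: "f x \<in> tree_points V E" and fy: "f y \<in> tree_points V E"
    using qi assms(2,3) unfolding quasi_isometry_def by auto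
  from fx show "fst (f x) \<in> V" by (rule tree_ends_props(4))
  have "d x y / L - C \<le> tree_dist E (f x) (f y)" "tree_dist E (f x) (f y) \<le> L * d x y + C"
    using qi assms(2,3) unfolding quasi_isometry_def by auto
  then show "d x y / L - (C + 2) \<le> real (gdist E (fst (f x)) (fst (f y)))"
    "real (gdist E (fst (f x)) (fst (f y))) \<le> L * d x y + (C + 2)"
    using tree_dist_fst_approx[OF fx fy] by (simp_all add: abs_le_iff)
qed

lemma quasi_isometry_vertex_map:
  assumes onto: "g ` X = V" and "0 \<le> C"
    and lower: "\<And>x y. x \<in> X \<Longrightarrow> y \<in> X \<Longrightarrow> d x y / L - C \<le> real (gdist E (g x) (g y))"
    and upper: "\<And>x y. x \<in> X \<Longrightarrow> y \<in> X \<Longrightarrow> real (gdist E (g x) (g y)) \<le> L * d x y + C"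
  shows "quasi_isometry L (C + 1) X d (tree_points V E) (tree_dist E) (\<lambda>x. (g x, g x, 0))"
  unfolding quasi_isometry_def
proof (intro conjI ballI)
  show "(\<lambda>x. (g x, g x, 0)) ` X \<subseteq> tree_points V E"
    using onto unfolding tree_points_def by auto
next
  fix x y assume "x \<in> X" "y \<in> X"
  then show "d x y / L - (C + 1) \<le> tree_dist E (g x, g x, 0) (g y, g y, 0)"
    "tree_dist E (g x, g x, 0) (g y, g y, 0) \<le> L * d x y + (C + 1)"
    using lower[of x y] upper[of x y] by (simp_all add: tree_dist_vertices)
next
  fix p assume p: "p \<in> tree_points V E"
  then have "fst p \<in> g ` X" using tree_ends_props(4) onto by blast
  then obtain x where "x \<in> X" "g x = fst p" by (metis imageE)
  then show "\<exists>x\<in>X. tree_dist E p (g x, g x, 0) \<le> C + 1"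
    using tree_dist_to_fst[OF p] \<open>0 \<le> C\<close> by (intro bexI[of _ x]) auto
qed

lemma finite_gdist_ball:
  assumes lf: "locally_finite_graph V E" and "v \<in> V"
  shows "finite {w \<in> V. gdist E v w \<le> k}"
proof -
  have walks: "finite {w. (E ^^ i) v w}" for i
  proof (induction i)
    case 0
    then show ?case by simp
  next
    case (Suc i)
    have "finite {w. E u w}" if "(E ^^ i) v u" for u
      using lf relpowp_in_V[OF that \<open>v \<in> V\<close>] unfolding locally_finite_graph_def by blast
    then have "finite (\<Union>u\<in>{w. (E ^^ i) v w}. {w. E u w})" using Suc.IH by blast
    moreover have "{w. (E ^^ Suc i) v w} \<subseteq> (\<Union>u\<in>{w. (E ^^ i) v w}. {w. E u w})"
      by (auto elim: relpowp_Suc_E)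
    ultimately show ?case by (rule finite_subset[rotated])
  qed
  have "{w \<in> V. gdist E v w \<le> k} \<subseteq> (\<Union>i\<in>{..k}. {w. (E ^^ i) v w})"
    using gdist_relpowp[OF \<open>v \<in> V\<close>] by blast
  moreover have "finite (\<Union>i\<in>{..k}. {w. (E ^^ i) v w})" using walks by blast
  ultimately show ?thesis by (rule finite_subset)
qed

end

section \<open>Trees given by parent pointers\<close>

locale parent_tree =
  fixes V :: "nat set" and parent :: "nat \<Rightarrow> nat" and level :: "nat \<Rightarrow> nat" and root :: nat
  assumes root_in_V: "root \<in> V"
    and level_0_imp_root: "a \<in> V \<Longrightarrow> level a = 0 \<Longrightarrow> a = root"
    and parent_in_V: "a \<in> V \<Longrightarrow> 0 < level a \<Longrightarrow> parent a \<in> V"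
    and level_parent: "a \<in> V \<Longrightarrow> 0 < level a \<Longrightarrow> level (parent a) = level a - 1"
begin

definition parent_edge :: "nat \<Rightarrow> nat \<Rightarrow> bool" where
  "parent_edge a b \<longleftrightarrow> a \<in> V \<and> b \<in> V \<and> ((0 < level a \<and> b = parent a) \<or> (0 < level b \<and> a = parent b))"

lemma symp_parent_edge: "symp parent_edge"
  unfolding parent_edge_def symp_def by blast

lemma parent_edgeE:
  assumes "parent_edge a b"
  obtains "0 < level a" "b = parent a" "level b = level a - 1"
    | "0 < level b" "a = parent b" "level a = level b - 1"
proof -
  from assms have "a \<in> V" "b \<in> V" and "(0 < level a \<and> b = parent a) \<or> (0 < level b \<and> a = parent b)"
    unfolding parent_edge_def by auto
  then show thesis using that level_parent by auto
qed

lemma parent_edge_irrefl: "parent_edge a b \<Longrightarrow> a \<noteq> b"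
  by (elim parent_edgeE) auto

lemma parent_edge_not_child: "parent_edge c w \<Longrightarrow> level w \<le> level c \<Longrightarrow> w = parent c"
  by (elim parent_edgeE) auto

lemma relpowp_ancestor:
  assumes "a \<in> V" "i \<le> level a"
  shows "(parent_edge ^^ i) a ((parent ^^ i) a) \<and> (parent ^^ i) a \<in> V
    \<and> level ((parent ^^ i) a) = level a - i"
  using assms(2)
proof (induction i)
  case 0
  then show ?case using assms(1) by simp
next
  case (Suc i)
  let ?c = "(parent ^^ i) a"
  have IH: "(parent_edge ^^ i) a ?c" "?c \<in> V" "level ?c = level a - i" using Suc by auto
  have pos: "0 < level ?c" using IH(3) Suc.prems by simp
  have "parent_edge ?c (parent ?c)" unfolding parent_edge_def using pos IH(2) parent_in_V by blast
  with IH(1) have "(parent_edge ^^ Suc i) a (parent ?c)" by (rule relpowp_Suc_I)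
  then show ?case using parent_in_V[OF IH(2) pos] level_parent[OF IH(2) pos] IH(3) by simp
qed

text \<open>In a cycle, both neighbours of a vertex of maximal level would be its parent.\<close>
lemma parent_edge_no_cycle:
  assumes len: "3 \<le> length xs" and dist: "distinct xs" and path: "successively parent_edge xs"
    and closing: "parent_edge (last xs) (hd xs)"
  shows False
proof -
  define n where "n = length xs"
  define next_ix where "next_ix i = (if Suc i < n then Suc i else 0)" for i
  have adj: "parent_edge (xs ! i) (xs ! next_ix i)" if "i < n" for i
  proof (cases "Suc i < n")
    case True
    then show ?thesis using successively_nth[OF path] next_ix_def n_def by simp
  next
    case False
    then have "i = n - 1" using that by simp
    moreover have "xs \<noteq> []" using len by auto
    then have "xs ! (n - 1) = last xs" "xs ! 0 = hd xs"
      using n_def by (simp_all add: last_conv_nth hd_conv_nth)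
    ultimately show ?thesis using closing False next_ix_def by simp
  qed
  have fin: "finite (level ` set xs)" "level ` set xs \<noteq> {}" using len by auto
  obtain c where c: "c \<in> set xs" "level c = Max (level ` set xs)" using Max_in[OF fin] by auto
  then obtain i0 where i0: "i0 < n" "xs ! i0 = c" using n_def by (auto simp: in_set_conv_nth)
  have maxc: "level (xs ! k) \<le> level c" if "k < n" for k
    using c(2) fin(1) that n_def by auto
  define prev where "prev = (if i0 = 0 then n - 1 else i0 - 1)"
  have prev: "prev < n" "next_ix prev = i0" "next_ix i0 < n" "prev \<noteq> next_ix i0"
    using i0 len n_def unfolding prev_def next_ix_def by auto
  have "parent_edge c (xs ! prev)" using sympD[OF symp_parent_edge adj[OF prev(1)]] prev(2) i0 by simp
  then have "xs ! prev = parent c" using parent_edge_not_child maxc prev(1) by blast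
  moreover have "parent_edge c (xs ! next_ix i0)" using adj[OF i0(1)] i0 by simp
  then have "xs ! next_ix i0 = parent c" using parent_edge_not_child maxc prev(3) by blast
  ultimately show False
    using nth_eq_iff_index_eq[OF dist prev(1)[unfolded n_def] prev(3)[unfolded n_def]] prev(4) by simp
qed

lemma simplicial_tree_parent_edge: "simplicial_tree V parent_edge"
  unfolding simplicial_tree_def
proof (intro conjI allI impI ballI)
  show "V \<noteq> {}" using root_in_V by blast
next
  fix x y assume xy: "parent_edge x y"
  then show "x \<in> V" "y \<in> V" by (simp_all add: parent_edge_def)
  show "parent_edge y x" using symp_parent_edge xy by (rule sympD)
  show "x \<noteq> y" using xy by (rule parent_edge_irrefl)
next
  have to_root: "(parent_edge ^^ level a) a root" if "a \<in> V" for a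
    using relpowp_ancestor[of a "level a"] level_0_imp_root that by auto
  fix x y assume "x \<in> V" "y \<in> V"
  then show "\<exists>n. (parent_edge ^^ n) x y"
    using relpowp_trans[OF to_root relpowp_sym[OF symp_parent_edge to_root]] by blast
next
  show "\<nexists>xs. 3 \<le> length xs \<and> distinct xs \<and>
      (\<forall>i. Suc i < length xs \<longrightarrow> parent_edge (xs ! i) (xs ! Suc i)) \<and> parent_edge (last xs) (hd xs)"
    using parent_edge_no_cycle unfolding successively_conv_nth[symmetric] by blast
qed

sublocale tree_graph V parent_edge
  by unfold_locales (rule simplicial_tree_parent_edge)

lemma gdist_le_via_ancestor:
  assumes "a \<in> V" "b \<in> V" "i \<le> level a" "j \<le> level b" "(parent ^^ i) a = (parent ^^ j) b"
  shows "gdist parent_edge a b \<le> i + j"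
proof -
  have "(parent_edge ^^ i) a ((parent ^^ i) a)" using relpowp_ancestor[OF assms(1,3)] by simp
  moreover have "(parent_edge ^^ j) b ((parent ^^ i) a)"
    using relpowp_ancestor[OF assms(2,4)] assms(5) by simp
  then have "(parent_edge ^^ j) ((parent ^^ i) a) b" by (rule relpowp_sym[OF symp_parent_edge])
  ultimately show ?thesis using relpowp_trans gdist_le by metis
qed

lemma relpowp_common_ancestor:
  assumes "a \<in> V" "(parent_edge ^^ n) a b"
  shows "\<exists>i j. i \<le> level a \<and> j \<le> level b \<and> (parent ^^ i) a = (parent ^^ j) b \<and> i + j \<le> n"
  using assms(2)
proof (induction n arbitrary: b)
  case 0
  then show ?case by (intro exI[of _ 0]) auto
next
  case (Suc n)
  from Suc.prems obtain c where c: "(parent_edge ^^ n) a c" "parent_edge c b" by (rule relpowp_Suc_E)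
  from Suc.IH[OF c(1)] obtain i j where ij: "i \<le> level a" "j \<le> level c"
    "(parent ^^ i) a = (parent ^^ j) c" "i + j \<le> n"
    by blast
  from c(2) show ?case
  proof (cases rule: parent_edgeE)
    case 1
    show ?thesis
    proof (cases j)
      case 0
      then have "(parent ^^ i) a = c" using ij by simp
      then have "level c = level a - i" using relpowp_ancestor[OF assms(1) ij(1)] by simp
      then have "Suc i \<le> level a" using 1 by simp
      moreover have "(parent ^^ Suc i) a = (parent ^^ 0) b" using \<open>(parent ^^ i) a = c\<close> 1 by simp
      ultimately show ?thesis using ij by (intro exI[of _ "Suc i"] exI[of _ 0]) auto
    next
      case (Suc j')
      have "(parent ^^ j') b = (parent ^^ j) c" using 1 Suc by (simp add: funpow_swap1)
      then show ?thesis using ij 1 Suc by (intro exI[of _ i] exI[of _ j']) auto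
    qed
  next
    case 2
    have "(parent ^^ Suc j) b = (parent ^^ j) c" using 2 by (simp add: funpow_swap1)
    then show ?thesis using ij 2 by (intro exI[of _ i] exI[of _ "Suc j"]) auto
  qed
qed

lemma common_ancestor_within_gdist:
  assumes "a \<in> V" "b \<in> V"
  obtains i j where "i \<le> level a" "j \<le> level b" "(parent ^^ i) a = (parent ^^ j) b"
    "i + j \<le> gdist parent_edge a b"
  using relpowp_common_ancestor[OF assms(1) gdist_relpowp[OF assms]] by blast

end

section \<open>Chains in a geodesic space mapped to a tree\<close>

locale coarse_tree_map =
  fixes X :: "'a set" and d :: "'a \<Rightarrow> 'a \<Rightarrow> real" and V :: "nat set" and E :: "nat \<Rightarrow> nat \<Rightarrow> bool"
    and L :: real and C :: real and f :: "'a \<Rightarrow> nat" and base :: 'a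
  assumes geodesic: "geodesic_metric_space X d"
    and tree: "simplicial_tree V E"
    and L_ge_1: "1 \<le> L" and C_nonneg: "0 \<le> C"
    and f_in_V: "\<And>x. x \<in> X \<Longrightarrow> f x \<in> V"
    and f_lower: "\<And>x y. x \<in> X \<Longrightarrow> y \<in> X \<Longrightarrow> d x y / L - C \<le> real (gdist E (f x) (f y))"
    and f_upper: "\<And>x y. x \<in> X \<Longrightarrow> y \<in> X \<Longrightarrow> real (gdist E (f x) (f y)) \<le> L * d x y + C"
    and base_in_X: "base \<in> X"
begin

sublocale T: tree_graph V E by unfold_locales (rule tree)

sublocale M: Metric_space X d
  using geodesic unfolding geodesic_metric_space_def by blast

lemma dist_le_gdist: "x \<in> X \<Longrightarrow> y \<in> X \<Longrightarrow> d x y \<le> L * (real (gdist E (f x) (f y)) + C)"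
  using f_lower[of x y] L_ge_1 by (simp add: field_simps)

definition height :: "'a \<Rightarrow> real" where
  "height x = d base x"

definition ray :: "'a \<Rightarrow> real \<Rightarrow> 'a" where
  "ray x = (SOME g. g 0 = base \<and> g (d base x) = x \<and> g ` {0..d base x} \<subseteq> X \<and>
     (\<forall>s\<in>{0..d base x}. \<forall>t\<in>{0..d base x}. d (g s) (g t) = \<bar>s - t\<bar>))"

lemma ray:
  assumes "x \<in> X"
  shows ray_0: "ray x 0 = base" and ray_height: "ray x (height x) = x"
    and ray_in_X: "\<And>t. t \<in> {0..height x} \<Longrightarrow> ray x t \<in> X"
    and dist_ray: "\<And>s t. s \<in> {0..height x} \<Longrightarrow> t \<in> {0..height x} \<Longrightarrow>
      d (ray x s) (ray x t) = \<bar>s - t\<bar>"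
proof -
  have "\<exists>g. g 0 = base \<and> g (d base x) = x \<and> g ` {0..d base x} \<subseteq> X \<and>
     (\<forall>s\<in>{0..d base x}. \<forall>t\<in>{0..d base x}. d (g s) (g t) = \<bar>s - t\<bar>)"
    using geodesic base_in_X assms unfolding geodesic_metric_space_def by blast
  from someI_ex[OF this] show "ray x 0 = base" "ray x (height x) = x"
    "\<And>t. t \<in> {0..height x} \<Longrightarrow> ray x t \<in> X"
    "\<And>s t. s \<in> {0..height x} \<Longrightarrow> t \<in> {0..height x} \<Longrightarrow> d (ray x s) (ray x t) = \<bar>s - t\<bar>"
    unfolding ray_def height_def by auto
qed

lemma height_nonneg [simp]: "0 \<le> height x"
  unfolding height_def by simp

lemma height_ray: "x \<in> X \<Longrightarrow> t \<in> {0..height x} \<Longrightarrow> height (ray x t) = t"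
  using dist_ray[of x 0 t] ray_0[of x] unfolding height_def by auto

lemma dist_ray_end: "x \<in> X \<Longrightarrow> t \<in> {0..height x} \<Longrightarrow> d (ray x t) x = height x - t"
  using dist_ray[of x t "height x"] ray_height[of x] by auto

lemma height_le: "x \<in> X \<Longrightarrow> y \<in> X \<Longrightarrow> height y \<le> height x + d x y"
  unfolding height_def using M.triangle base_in_X by blast

text \<open>Two points with the same image under \<open>f\<close> are at distance at most \<open>L * C \<le> chain_gap\<close>,
  and \<open>chain_gap \<ge> 1\<close> lets geodesics be cut into chains.\<close>
definition chain_gap :: real where
  "chain_gap = 1 + L * C"

definition chain_step :: "'a set \<Rightarrow> 'a \<Rightarrow> 'a \<Rightarrow> bool" where
  "chain_step A x y \<longleftrightarrow> x \<in> A \<and> y \<in> A \<and> d x y \<le> chain_gap"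

definition jump_bound :: real where
  "jump_bound = L * chain_gap + C"

lemma chain_gap_ge_1: "1 \<le> chain_gap"
  unfolding chain_gap_def using L_ge_1 C_nonneg by simp

lemma jump_bound_nonneg: "0 \<le> jump_bound"
  unfolding jump_bound_def using L_ge_1 C_nonneg chain_gap_ge_1 by simp

lemma symp_chain_step: "symp (chain_step A)"
  unfolding chain_step_def symp_def using M.commute by metis

lemma chain_sym: "(chain_step A)\<^sup>*\<^sup>* x y \<Longrightarrow> (chain_step A)\<^sup>*\<^sup>* y x"
  using symp_rtranclp[OF symp_chain_step] by (rule sympD)

lemma chain_along_path:
  assumes "lo \<le> hi" and in_A: "\<And>t. t \<in> {lo..hi} \<Longrightarrow> g t \<in> A"
    and short: "\<And>a b. a \<in> {lo..hi} \<Longrightarrow> b \<in> {lo..hi} \<Longrightarrow> d (g a) (g b) \<le> \<bar>a - b\<bar>"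
  shows "(chain_step A)\<^sup>*\<^sup>* (g lo) (g hi)"
proof -
  have reach: "(chain_step A)\<^sup>*\<^sup>* (g lo) (g t)" if "t \<in> {lo..hi}" "t \<le> lo + real n" for n t
    using that
  proof (induction n arbitrary: t)
    case 0
    then show ?case by auto
  next
    case (Suc n)
    show ?case
    proof (cases "t \<le> lo + real n")
      case True
      then show ?thesis using Suc by blast
    next
      case False
      define t' where "t' = max lo (t - 1)"
      have t': "t' \<in> {lo..hi}" "t' \<le> lo + real n" using Suc.prems False unfolding t'_def by auto
      have "chain_step A (g t') (g t)"
        using in_A t' Suc.prems short[OF t'(1) Suc.prems(1)] chain_gap_ge_1
        unfolding chain_step_def t'_def by auto
      with Suc.IH[OF t'] show ?thesis by (rule rtranclp.rtrancl_into_rtrancl)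
    qed
  qed
  obtain n :: nat where "hi - lo \<le> real n" using real_arch_simple by blast
  then show ?thesis using reach[of hi n] assms(1) by simp
qed

lemma gdist_chain_step:
  assumes "chain_step A u w" "A \<subseteq> X"
  shows "real (gdist E (f u) (f w)) \<le> jump_bound"
proof -
  have "real (gdist E (f u) (f w)) \<le> L * d u w + C" using assms f_upper unfolding chain_step_def by blast
  also have "\<dots> \<le> L * chain_gap + C" using assms L_ge_1 unfolding chain_step_def by simp
  finally show ?thesis unfolding jump_bound_def .
qed

lemma chain_passes_near_cut:
  assumes "(chain_step A)\<^sup>*\<^sup>* x y" "A \<subseteq> X" "f x \<in> S" "f y \<notin> S"
    and cut: "\<And>u w. u \<in> S \<Longrightarrow> u \<in> V \<Longrightarrow> w \<in> V \<Longrightarrow> w \<notin> S \<Longrightarrow> gdist E u p \<le> gdist E u w"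
  obtains u where "u \<in> A" "real (gdist E (f u) p) \<le> jump_bound"
proof -
  obtain u w where uw: "chain_step A u w" "f u \<in> S" "f w \<notin> S"
    using rtranclp_crossing[of "chain_step A" x y "\<lambda>z. f z \<in> S"] assms(1,3,4) by blast
  then have "u \<in> A" "w \<in> A" unfolding chain_step_def by auto
  then have "gdist E (f u) p \<le> gdist E (f u) (f w)" using cut uw f_in_V assms(2) by blast
  then show thesis using that \<open>u \<in> A\<close> gdist_chain_step[OF uw(1) assms(2)] by simp
qed

definition superlevel :: "real \<Rightarrow> 'a set" where
  "superlevel m = {x \<in> X. m \<le> height x}"

abbreviation linked :: "real \<Rightarrow> 'a \<Rightarrow> 'a \<Rightarrow> bool" where
  "linked m \<equiv> (chain_step (superlevel m))\<^sup>*\<^sup>*"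

lemma superlevel_subset: "superlevel m \<subseteq> X"
  unfolding superlevel_def by auto

lemma superlevel_antimono: "m' \<le> m \<Longrightarrow> superlevel m \<subseteq> superlevel m'"
  unfolding superlevel_def by auto

lemma linked_ray:
  assumes "x \<in> X" "0 \<le> m" "m \<le> height x"
  shows "linked m (ray x m) x"
proof -
  have "linked m (ray x m) (ray x (height x))"
    by (rule chain_along_path)
      (use assms ray[OF assms(1)] height_ray[OF assms(1)] in \<open>auto simp: superlevel_def\<close>)
  then show ?thesis using ray_height[OF assms(1)] by simp
qed

lemma chain_through_base:
  assumes "x \<in> X" "y \<in> X" "0 \<le> m" "m \<le> height x" "m \<le> height y"
  shows "(chain_step (ray x ` {0..m} \<union> ray y ` {0..m}))\<^sup>*\<^sup>* (ray x m) (ray y m)"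
proof -
  let ?A = "ray x ` {0..m} \<union> ray y ` {0..m}"
  have "(chain_step ?A)\<^sup>*\<^sup>* (ray x 0) (ray x m)"
    by (rule chain_along_path) (use assms ray[OF assms(1)] in auto)
  moreover have "(chain_step ?A)\<^sup>*\<^sup>* (ray y 0) (ray y m)"
    by (rule chain_along_path) (use assms ray[OF assms(2)] in auto)
  ultimately show ?thesis
    using chain_sym ray_0[OF assms(1)] ray_0[OF assms(2)] by (metis rtranclp_trans)
qed

definition mid_bound :: real where
  "mid_bound = jump_bound + L * (L * (2 * jump_bound + C)) + C"

definition proj_bound :: real where
  "proj_bound = L * (2 * mid_bound + 1 + C)"

lemma mid_bound_nonneg: "0 \<le> mid_bound"
  unfolding mid_bound_def using L_ge_1 C_nonneg jump_bound_nonneg by simp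

lemma proj_bound_nonneg: "0 \<le> proj_bound"
  unfolding proj_bound_def using L_ge_1 C_nonneg mid_bound_nonneg by simp

lemma linked_rays:
  assumes "x \<in> X" "y \<in> X" "0 \<le> m" "m \<le> height x" "m \<le> height y" "linked m x y"
  shows "linked m (ray x m) (ray y m)"
  using linked_ray[of x m] linked_ray[of y m] chain_sym assms by (meson rtranclp_trans)

lemma ray_point_near_superlevel:
  assumes z: "z \<in> X" "m \<le> height z" and t: "0 \<le> t" "t \<le> m" and u: "u \<in> superlevel m" and "p \<in> V"
    and near: "real (gdist E (f (ray z t)) p) \<le> jump_bound" "real (gdist E (f u) p) \<le> jump_bound"
  shows "real (gdist E p (f (ray z m))) \<le> mid_bound"
proof -
  define B where "B = L * (2 * jump_bound + C)"
  have rX: "ray z t \<in> X" "ray z m \<in> X" and uX: "u \<in> X"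
    using ray_in_X[OF z(1)] z(2) t u superlevel_subset by auto
  have "gdist E (f (ray z t)) (f u) \<le> gdist E (f (ray z t)) p + gdist E p (f u)"
    using T.gdist_triangle f_in_V rX uX \<open>p \<in> V\<close> by blast
  moreover have "gdist E p (f u) = gdist E (f u) p" using T.gdist_sym f_in_V uX \<open>p \<in> V\<close> by blast
  ultimately have "real (gdist E (f (ray z t)) (f u)) \<le> 2 * jump_bound" using near by linarith
  then have "d (ray z t) u \<le> B"
    using dist_le_gdist[OF rX(1) uX] L_ge_1 unfolding B_def by (smt (verit) mult_left_mono)
  moreover have "height u \<le> height (ray z t) + d (ray z t) u" using height_le rX(1) uX by blast
  moreover have "height (ray z t) = t" "m \<le> height u"
    using height_ray[OF z(1)] z(2) t u unfolding superlevel_def by auto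
  moreover have "d (ray z t) (ray z m) = m - t" using dist_ray[OF z(1), of t m] z(2) t by auto
  ultimately have "d (ray z t) (ray z m) \<le> B" by linarith
  then have "real (gdist E (f (ray z t)) (f (ray z m))) \<le> L * B + C"
    using f_upper[OF rX] L_ge_1 by (smt (verit) mult_left_mono)
  moreover have "gdist E p (f (ray z m)) \<le> gdist E p (f (ray z t)) + gdist E (f (ray z t)) (f (ray z m))"
    using T.gdist_triangle \<open>p \<in> V\<close> f_in_V rX by blast
  moreover have "gdist E p (f (ray z t)) = gdist E (f (ray z t)) p"
    using T.gdist_sym \<open>p \<in> V\<close> f_in_V rX by simp
  ultimately show ?thesis using near(1) unfolding mid_bound_def B_def by linarith
qed

text \<open>If the images of \<open>ray x m\<close> and \<open>ray y m\<close> were far apart, a vertex \<open>p\<close> in the middle of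
  the tree geodesic between them would separate them.  Both the chain linking \<open>x\<close> to \<open>y\<close> above
  height \<open>m\<close> and the chain through \<open>base\<close> along the two rays must then pass near \<open>p\<close>; comparing
  heights, some point of height \<open>m\<close> on one of the rays lands near \<open>p\<close>, which is impossible.\<close>
lemma gdist_rays_linked:
  assumes x: "x \<in> X" and y: "y \<in> X" and m: "0 \<le> m" "m \<le> height x" "m \<le> height y"
    and xy: "linked m x y"
  shows "real (gdist E (f (ray x m)) (f (ray y m))) \<le> 2 * mid_bound + 1"
proof (rule ccontr)
  define x' y' where "x' = ray x m" and "y' = ray y m"
  have x'X: "x' \<in> X" and y'X: "y' \<in> X" using ray_in_X x y m unfolding x'_def y'_def by auto
  define N where "N = gdist E (f x') (f y')"
  define j where "j = N div 2"
  assume "\<not> real (gdist E (f (ray x m)) (f (ray y m))) \<le> 2 * mid_bound + 1"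
  moreover have "2 * j \<le> N" "N \<le> 2 * j + 1" unfolding j_def by linarith+
  ultimately have far: "mid_bound < real j" "mid_bound < real (N - j)"
    unfolding N_def x'_def y'_def by linarith+
  then have "1 \<le> j" using mid_bound_nonneg by linarith
  have "j \<le> gdist E (f x') (f y')" using \<open>2 * j \<le> N\<close> unfolding N_def by linarith
  then obtain p where p: "p \<in> V" "gdist E (f x') p = j" "gdist E p (f y') = N - j"
    unfolding N_def by (rule T.gdist_split[OF f_in_V[OF x'X] f_in_V[OF y'X]])
  obtain S where S: "f x' \<in> S" "f y' \<notin> S"
    "\<And>u w. u \<in> S \<Longrightarrow> u \<in> V \<Longrightarrow> w \<in> V \<Longrightarrow> w \<notin> S \<Longrightarrow> gdist E u p \<le> gdist E u w"
    by (rule T.geodesic_vertex_separates[OF f_in_V[OF x'X] f_in_V[OF y'X] p(1) \<open>1 \<le> j\<close> p(2)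
          p(3)[unfolded N_def] \<open>j \<le> gdist E (f x') (f y')\<close>]) blast
  have "linked m x' y'" using linked_rays[OF x y m xy] unfolding x'_def y'_def .
  then obtain u where u: "u \<in> superlevel m" "real (gdist E (f u) p) \<le> jump_bound"
    by (rule chain_passes_near_cut[OF _ superlevel_subset S]) blast
  have "(chain_step (ray x ` {0..m} \<union> ray y ` {0..m}))\<^sup>*\<^sup>* x' y'"
    using chain_through_base[OF x y m] unfolding x'_def y'_def .
  moreover have "ray x ` {0..m} \<union> ray y ` {0..m} \<subseteq> X" using ray_in_X x y m by auto
  ultimately obtain u' where u': "u' \<in> ray x ` {0..m} \<union> ray y ` {0..m}"
    "real (gdist E (f u') p) \<le> jump_bound"
    by (rule chain_passes_near_cut[OF _ _ S]) blast
  then obtain z t where z: "z \<in> {x, y}" "t \<in> {0..m}" "u' = ray z t" by blast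
  have zX: "z \<in> X" and mz: "m \<le> height z" using z(1) x y m by auto
  have "real (gdist E p (f (ray z m))) \<le> mid_bound"
    using ray_point_near_superlevel[OF zX mz _ _ u(1) p(1) _ u(2)] u'(2) z(2,3) by auto
  moreover have "f (ray z m) = f x' \<or> f (ray z m) = f y'" using z(1) unfolding x'_def y'_def by auto
  moreover have "gdist E p (f x') = j" using p T.gdist_sym f_in_V[OF x'X] by simp
  ultimately show False using far p(3) by auto
qed

lemma dist_rays_linked:
  assumes "x \<in> X" "y \<in> X" "0 \<le> m" "m \<le> height x" "m \<le> height y" "linked m x y"
  shows "d (ray x m) (ray y m) \<le> proj_bound"
proof -
  have "ray x m \<in> X" "ray y m \<in> X" using ray_in_X assms by auto
  then have "d (ray x m) (ray y m) \<le> L * (real (gdist E (f (ray x m)) (f (ray y m))) + C)"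
    by (rule dist_le_gdist)
  also have "\<dots> \<le> L * (2 * mid_bound + 1 + C)" using gdist_rays_linked[OF assms] L_ge_1 by simp
  finally show ?thesis unfolding proj_bound_def .
qed

lemma linked_mono: "m' \<le> m \<Longrightarrow> linked m x y \<Longrightarrow> linked m' x y"
  using superlevel_antimono[of m' m] rtranclp_mono[of "chain_step (superlevel m)" "chain_step (superlevel m')"]
  unfolding chain_step_def by (auto simp: le_fun_def)

lemma linked_in_superlevel: "linked m x y \<Longrightarrow> x \<in> superlevel m \<Longrightarrow> y \<in> superlevel m"
  by (induction rule: rtranclp_induct) (auto simp: chain_step_def)

subsection \<open>The tree of chain components of superlevel sets\<close>

text \<open>The component of \<open>x\<close> in \<open>superlevel n\<close> is labelled by the \<open>f\<close>-image of a chosen point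
  of height exactly \<open>n\<close> in it; paired with \<open>n\<close> this encodes the component as a natural number.\<close>
definition level_rep :: "nat \<Rightarrow> 'a \<Rightarrow> 'a" where
  "level_rep n x = (SOME y. linked (real n) x y \<and> height y = real n)"

lemma level_rep:
  assumes "x \<in> superlevel (real n)"
  shows "linked (real n) x (level_rep n x)" "height (level_rep n x) = real n"
    "level_rep n x \<in> superlevel (real n)"
proof -
  have xX: "x \<in> X" and hx: "real n \<le> height x" using assms unfolding superlevel_def by auto
  have "linked (real n) x (ray x (real n)) \<and> height (ray x (real n)) = real n"
    using chain_sym[OF linked_ray[OF xX _ hx]] height_ray[OF xX] hx by simp
  then have "linked (real n) x (level_rep n x) \<and> height (level_rep n x) = real n"
    unfolding level_rep_def by (rule someI)
  then show "linked (real n) x (level_rep n x)" "height (level_rep n x) = real n"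
    "level_rep n x \<in> superlevel (real n)"
    using linked_in_superlevel assms by auto
qed

lemma level_rep_cong:
  assumes "linked (real n) x y"
  shows "level_rep n x = level_rep n y"
proof -
  have "linked (real n) x z \<longleftrightarrow> linked (real n) y z" for z
    using assms chain_sym rtranclp_trans by metis
  then show ?thesis unfolding level_rep_def by simp
qed

definition comp_label :: "nat \<Rightarrow> 'a \<Rightarrow> nat" where
  "comp_label n x = f (level_rep n x)"

lemma comp_label_eq_iff:
  assumes x: "x \<in> superlevel (real n)" and y: "y \<in> superlevel (real n)"
  shows "comp_label n x = comp_label n y \<longleftrightarrow> linked (real n) x y"
proof
  assume "linked (real n) x y"
  then show "comp_label n x = comp_label n y" unfolding comp_label_def using level_rep_cong by simp
next
  assume same: "comp_label n x = comp_label n y"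
  let ?rx = "level_rep n x" and ?ry = "level_rep n y"
  have r: "?rx \<in> superlevel (real n)" "?ry \<in> superlevel (real n)" using level_rep x y by auto
  then have "?rx \<in> X" "?ry \<in> X" using superlevel_subset by auto
  then have "d ?rx ?ry \<le> L * (real (gdist E (f ?rx) (f ?ry)) + C)" by (rule dist_le_gdist)
  also have "\<dots> \<le> chain_gap" using same unfolding comp_label_def chain_gap_def by simp
  finally have "chain_step (superlevel (real n)) ?rx ?ry" unfolding chain_step_def using r by blast
  moreover have "linked (real n) x ?rx" "linked (real n) ?ry y" using level_rep x y chain_sym by blast+
  ultimately show "linked (real n) x y" by (meson rtranclp.rtrancl_into_rtrancl rtranclp_trans)
qed

definition comp_vertex :: "nat \<Rightarrow> 'a \<Rightarrow> nat" where
  "comp_vertex n x = prod_encode (n, comp_label n x)"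

definition comp_level :: "nat \<Rightarrow> nat" where
  "comp_level a = fst (prod_decode a)"

lemma comp_level_vertex [simp]: "comp_level (comp_vertex n x) = n"
  unfolding comp_level_def comp_vertex_def by simp

lemma comp_vertex_eq_iff:
  assumes "x \<in> superlevel (real n)" "y \<in> superlevel (real n')"
  shows "comp_vertex n x = comp_vertex n' y \<longleftrightarrow> n = n' \<and> linked (real n) x y"
  using comp_label_eq_iff assms unfolding comp_vertex_def by auto

definition comp_vertices :: "nat set" where
  "comp_vertices = {comp_vertex n x | n x. x \<in> superlevel (real n)}"

definition comp_parent :: "nat \<Rightarrow> nat" where
  "comp_parent a = comp_vertex (comp_level a - 1)
     (SOME x. x \<in> superlevel (real (comp_level a)) \<and> a = comp_vertex (comp_level a) x)"

definition comp_root :: nat where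
  "comp_root = comp_vertex 0 base"

lemma comp_parent_vertex:
  assumes x: "x \<in> superlevel (real (Suc n))"
  shows "comp_parent (comp_vertex (Suc n) x) = comp_vertex n x"
proof -
  let ?a = "comp_vertex (Suc n) x"
  define x' where "x' = (SOME x'. x' \<in> superlevel (real (Suc n)) \<and> ?a = comp_vertex (Suc n) x')"
  have "x' \<in> superlevel (real (Suc n)) \<and> ?a = comp_vertex (Suc n) x'"
    unfolding x'_def using x by (metis (mono_tags, lifting) someI)
  then have x': "x' \<in> superlevel (real (Suc n))" and "?a = comp_vertex (Suc n) x'" by auto
  then have "linked (real (Suc n)) x x'" using comp_vertex_eq_iff[OF x x'(1)] by blast
  then have "linked (real n) x x'" by (rule linked_mono[rotated]) simp
  moreover have "x \<in> superlevel (real n)" "x' \<in> superlevel (real n)"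
    using x x' superlevel_antimono[of "real n" "real (Suc n)"] by auto
  ultimately have "comp_vertex n x' = comp_vertex n x" using comp_vertex_eq_iff chain_sym by blast
  then show ?thesis unfolding comp_parent_def x'_def by simp
qed

lemma superlevel_0: "x \<in> X \<Longrightarrow> x \<in> superlevel 0"
  unfolding superlevel_def by simp

lemma parent_tree_components: "parent_tree comp_vertices comp_parent comp_level comp_root"
proof
  show "comp_root \<in> comp_vertices" unfolding comp_vertices_def comp_root_def
    using superlevel_0[OF base_in_X] by force
next
  fix a assume "a \<in> comp_vertices" "comp_level a = 0"
  then obtain x where x: "x \<in> superlevel 0" "a = comp_vertex 0 x" unfolding comp_vertices_def by auto
  then have "x \<in> X" using superlevel_subset by auto
  then have "linked 0 base x" using linked_ray[of x 0] ray_0 by simp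
  then show "a = comp_root"
    unfolding comp_root_def using x comp_vertex_eq_iff superlevel_0[OF base_in_X] chain_sym by simp
next
  fix a assume a: "a \<in> comp_vertices" "0 < comp_level a"
  then obtain n x where x: "x \<in> superlevel (real (Suc n))" "a = comp_vertex (Suc n) x"
    unfolding comp_vertices_def by (auto simp: gr0_conv_Suc)
  then have "comp_parent a = comp_vertex n x" using comp_parent_vertex by simp
  moreover have "x \<in> superlevel (real n)" using x superlevel_antimono[of "real n" "real (Suc n)"] by auto
  ultimately show "comp_parent a \<in> comp_vertices" "comp_level (comp_parent a) = comp_level a - 1"
    unfolding comp_vertices_def using x by auto
qed

sublocale CT: parent_tree comp_vertices comp_parent comp_level comp_root
  by (rule parent_tree_components)

lemma comp_parent_iter:
  assumes "x \<in> superlevel (real n)" "i \<le> n"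
  shows "(comp_parent ^^ i) (comp_vertex n x) = comp_vertex (n - i) x"
  using assms(2)
proof (induction i)
  case 0
  then show ?case by simp
next
  case (Suc i)
  then have "(comp_parent ^^ Suc i) (comp_vertex n x) = comp_parent (comp_vertex (Suc (n - Suc i)) x)"
    by (simp add: Suc_diff_Suc)
  also have "\<dots> = comp_vertex (n - Suc i) x"
    using comp_parent_vertex assms(1) superlevel_antimono[of "real (Suc (n - Suc i))" "real n"] Suc.prems
    by auto
  finally show ?case .
qed

lemma geodesic_min_height:
  assumes xX: "x \<in> X" and yX: "y \<in> X"
  obtains g t0 where "g 0 = x" "g (d x y) = y" "\<And>t. t \<in> {0..d x y} \<Longrightarrow> g t \<in> X"
    "\<And>a b. a \<in> {0..d x y} \<Longrightarrow> b \<in> {0..d x y} \<Longrightarrow> d (g a) (g b) = \<bar>a - b\<bar>"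
    "\<And>t. t \<in> {0..d x y} \<Longrightarrow> height (g t0) \<le> height (g t)"
    "height x + height y - 2 * height (g t0) \<le> d x y"
proof -
  obtain g where g: "g 0 = x" "g (d x y) = y" "g ` {0..d x y} \<subseteq> X"
    "\<And>a b. a \<in> {0..d x y} \<Longrightarrow> b \<in> {0..d x y} \<Longrightarrow> d (g a) (g b) = \<bar>a - b\<bar>"
    using geodesic xX yX unfolding geodesic_metric_space_def by meson
  have lip: "dist (height (g a)) (height (g b)) \<le> 1 * dist a b" if "a \<in> {0..d x y}" "b \<in> {0..d x y}" for a b
  proof -
    have "g a \<in> X" "g b \<in> X" using g(3) that by auto
    then have "height (g a) \<le> height (g b) + d (g b) (g a)" "height (g b) \<le> height (g a) + d (g a) (g b)"
      using height_le by auto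
    moreover have "d (g a) (g b) = \<bar>a - b\<bar>" "d (g b) (g a) = \<bar>a - b\<bar>" using g(4) that by auto
    ultimately show ?thesis unfolding dist_real_def by (simp add: abs_le_iff)
  qed
  have "continuous_on {0..d x y} (\<lambda>t. height (g t))"
    by (rule lipschitz_on_continuous_on[of 1]) (rule lipschitz_onI[OF lip], auto)
  then obtain t0 where t0: "t0 \<in> {0..d x y}" "\<And>t. t \<in> {0..d x y} \<Longrightarrow> height (g t0) \<le> height (g t)"
    using continuous_attains_inf[of "{0..d x y}" "\<lambda>t. height (g t)"] by auto
  have "g t0 \<in> X" using g(3) t0(1) by auto
  then have "height x \<le> height (g t0) + d (g t0) x" "height y \<le> height (g t0) + d (g t0) y"
    using height_le xX yX by auto
  moreover have "d (g t0) x = t0" "d (g t0) y = d x y - t0"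
    using g(4)[of t0 0] g(4)[of t0 "d x y"] g(1,2) t0(1) by auto
  ultimately have "height x + height y - 2 * height (g t0) \<le> d x y" by linarith
  moreover have "\<And>t. t \<in> {0..d x y} \<Longrightarrow> g t \<in> X" using g(3) by auto
  ultimately show thesis using that[OF g(1,2) _ g(4) t0(2)] by blast
qed

lemma linked_at_low_level:
  assumes xX: "x \<in> X" and yX: "y \<in> X"
  obtains l :: nat where "real l \<le> height x" "real l \<le> height y" "linked (real l) x y"
    "height x + height y - 2 * real l - 2 \<le> d x y"
proof -
  obtain g t0 where g: "g 0 = x" "g (d x y) = y" "\<And>t. t \<in> {0..d x y} \<Longrightarrow> g t \<in> X"
    "\<And>a b. a \<in> {0..d x y} \<Longrightarrow> b \<in> {0..d x y} \<Longrightarrow> d (g a) (g b) = \<bar>a - b\<bar>"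
    "\<And>t. t \<in> {0..d x y} \<Longrightarrow> height (g t0) \<le> height (g t)"
    "height x + height y - 2 * height (g t0) \<le> d x y"
    by (rule geodesic_min_height[OF xX yX]) blast
  define k where "k = height (g t0)"
  have k: "0 \<le> k" "k \<le> height x" "k \<le> height y"
    using g(5)[of 0] g(5)[of "d x y"] g(1,2) unfolding k_def by auto
  define l where "l = nat \<lfloor>k\<rfloor>"
  have l: "real l \<le> k" "k < real l + 1" unfolding l_def using k(1) by linarith+
  have "real l \<le> height (g t)" if "t \<in> {0..d x y}" for t
    using g(5)[OF that] l(1) unfolding k_def by linarith
  then have "linked (real l) (g 0) (g (d x y))"
    by (intro chain_along_path) (use g(3,4) in \<open>auto simp: superlevel_def\<close>)
  then show thesis using that[of l] g(1,2,6) k l unfolding k_def by auto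
qed

lemma dist_le_linked:
  assumes xX: "x \<in> X" and yX: "y \<in> X" and l: "real l \<le> height x" "real l \<le> height y"
    and xy: "linked (real l) x y"
  shows "d x y \<le> height x + height y - 2 * real l + proj_bound"
proof -
  let ?x' = "ray x (real l)" and ?y' = "ray y (real l)"
  have "?x' \<in> X" "?y' \<in> X" using ray_in_X xX yX l by auto
  then have "d x y \<le> d x ?x' + d ?x' ?y' + d ?y' y"
    using M.triangle xX yX by (smt (verit))
  moreover have "d ?x' ?y' \<le> proj_bound" using dist_rays_linked[OF xX yX _ l xy] by simp
  moreover have "d x ?x' = height x - real l" "d ?y' y = height y - real l"
    using dist_ray_end[OF xX] dist_ray_end[OF yX] l M.commute by auto
  ultimately show ?thesis by linarith
qed

definition floor_height :: "'a \<Rightarrow> nat" where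
  "floor_height x = nat \<lfloor>height x\<rfloor>"

lemma floor_height: "real (floor_height x) \<le> height x" "height x < real (floor_height x) + 1"
  unfolding floor_height_def using height_nonneg[of x] by linarith+

lemma le_floor_height: "real l \<le> height x \<Longrightarrow> l \<le> floor_height x"
  unfolding floor_height_def by linarith

lemma in_superlevel_floor_height: "x \<in> X \<Longrightarrow> x \<in> superlevel (real (floor_height x))"
  unfolding superlevel_def using floor_height by auto

definition comp_of :: "'a \<Rightarrow> nat" where
  "comp_of x = comp_vertex (floor_height x) x"

lemma comp_of_ancestor:
  assumes "x \<in> X" "i \<le> floor_height x"
  shows "(comp_parent ^^ i) (comp_of x) = comp_vertex (floor_height x - i) x"
  unfolding comp_of_def using comp_parent_iter[OF in_superlevel_floor_height] assms by simp

lemma comp_of_image: "comp_of ` X = comp_vertices"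
proof
  show "comp_of ` X \<subseteq> comp_vertices"
    unfolding comp_of_def comp_vertices_def using in_superlevel_floor_height by blast
next
  show "comp_vertices \<subseteq> comp_of ` X"
  proof
    fix v assume "v \<in> comp_vertices"
    then obtain n x where x: "x \<in> superlevel (real n)" "v = comp_vertex n x"
      unfolding comp_vertices_def by auto
    have xX: "x \<in> X" and hx: "real n \<le> height x" using x unfolding superlevel_def by auto
    define z where "z = ray x (real n)"
    have "z \<in> X" "height z = real n" using ray_in_X[OF xX] height_ray[OF xX] hx z_def by auto
    moreover have "linked (real n) z x" using linked_ray[OF xX _ hx] z_def by simp
    ultimately have "comp_of z = v"
      unfolding comp_of_def floor_height_def using comp_vertex_eq_iff x superlevel_def by auto
    then show "v \<in> comp_of ` X" using \<open>z \<in> X\<close> by blast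
  qed
qed

lemma gdist_comp_of_le:
  assumes xX: "x \<in> X" and yX: "y \<in> X"
  shows "real (gdist CT.parent_edge (comp_of x) (comp_of y)) \<le> d x y + 2"
proof -
  obtain l where l: "real l \<le> height x" "real l \<le> height y" "linked (real l) x y"
    "height x + height y - 2 * real l - 2 \<le> d x y"
    using linked_at_low_level[OF xX yX] by blast
  have lx: "l \<le> floor_height x" and ly: "l \<le> floor_height y" using le_floor_height l by auto
  have "x \<in> superlevel (real l)" "y \<in> superlevel (real l)" using l xX yX unfolding superlevel_def by auto
  then have "comp_vertex l x = comp_vertex l y" using comp_vertex_eq_iff l(3) by simp
  then have "(comp_parent ^^ (floor_height x - l)) (comp_of x) = (comp_parent ^^ (floor_height y - l)) (comp_of y)"
    using comp_of_ancestor[OF xX] comp_of_ancestor[OF yX] lx ly by simp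
  moreover have "comp_of x \<in> comp_vertices" "comp_of y \<in> comp_vertices" using comp_of_image xX yX by auto
  ultimately have "gdist CT.parent_edge (comp_of x) (comp_of y) \<le> (floor_height x - l) + (floor_height y - l)"
    using CT.gdist_le_via_ancestor unfolding comp_of_def by simp
  then show ?thesis using floor_height[of x] floor_height[of y] l(4) lx ly by linarith
qed

lemma dist_le_gdist_comp_of:
  assumes xX: "x \<in> X" and yX: "y \<in> X"
  shows "d x y \<le> real (gdist CT.parent_edge (comp_of x) (comp_of y)) + proj_bound + 2"
proof -
  have "comp_of x \<in> comp_vertices" "comp_of y \<in> comp_vertices" using comp_of_image xX yX by auto
  then obtain i j where ij: "i \<le> floor_height x" "j \<le> floor_height y"
    "(comp_parent ^^ i) (comp_of x) = (comp_parent ^^ j) (comp_of y)"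
    "i + j \<le> gdist CT.parent_edge (comp_of x) (comp_of y)"
    unfolding comp_of_def by (rule CT.common_ancestor_within_gdist) simp_all
  define l where "l = floor_height x - i"
  have "x \<in> superlevel (real l)" "y \<in> superlevel (real (floor_height y - j))"
    using xX yX floor_height(1)[of x] floor_height(1)[of y] ij(1,2)
    unfolding superlevel_def l_def by (auto simp: of_nat_diff)
  moreover have "comp_vertex l x = comp_vertex (floor_height y - j) y"
    using ij(3) comp_of_ancestor[OF xX ij(1)] comp_of_ancestor[OF yX ij(2)] unfolding l_def by simp
  ultimately have l: "l = floor_height y - j" "linked (real l) x y" using comp_vertex_eq_iff by blast+
  have "real l \<le> height x" "real l \<le> height y"
    using floor_height(1)[of x] floor_height(1)[of y] ij(1,2) l(1) unfolding l_def by (simp_all add: of_nat_diff)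
  then have "d x y \<le> height x + height y - 2 * real l + proj_bound" using dist_le_linked xX yX l(2) by blast
  moreover have "real l = real (floor_height x) - real i" "real l = real (floor_height y) - real j"
    using ij(1,2) l(1) unfolding l_def by auto
  ultimately show ?thesis using floor_height[of x] floor_height[of y] ij(4) by linarith
qed

lemma quasi_isometry_comp_tree:
  "quasi_isometry 1 (proj_bound + 3) X d (tree_points comp_vertices CT.parent_edge)
     (tree_dist CT.parent_edge) (\<lambda>x. (comp_of x, comp_of x, 0))"
proof -
  have "quasi_isometry 1 (proj_bound + 2 + 1) X d (tree_points comp_vertices CT.parent_edge)
     (tree_dist CT.parent_edge) (\<lambda>x. (comp_of x, comp_of x, 0))"
    using proj_bound_nonneg gdist_comp_of_le dist_le_gdist_comp_of
    by (intro CT.quasi_isometry_vertex_map comp_of_image) fastforce+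
  then show ?thesis by (simp add: add.assoc)
qed

lemma comp_child:
  assumes x: "x \<in> superlevel (real n)" and edge: "CT.parent_edge (comp_vertex n x) w"
    and "w \<noteq> comp_parent (comp_vertex n x)"
  obtains y where "y \<in> superlevel (real (Suc n))" "linked (real n) x y" "w = comp_vertex (Suc n) y"
proof -
  from edge have "0 < comp_level w" "comp_vertex n x = comp_parent w" "w \<in> comp_vertices"
    using assms(3) by (auto elim: CT.parent_edgeE simp: CT.parent_edge_def)
  then obtain n' y where y: "y \<in> superlevel (real (Suc n'))" "w = comp_vertex (Suc n') y"
    unfolding comp_vertices_def by (auto simp: gr0_conv_Suc)
  then have "comp_vertex n x = comp_vertex n' y"
    using \<open>comp_vertex n x = comp_parent w\<close> comp_parent_vertex by simp
  moreover have "y \<in> superlevel (real n')" using y superlevel_antimono[of "real n'" "real (Suc n')"] by auto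
  ultimately have "n' = n" "linked (real n) x y" using comp_vertex_eq_iff[OF x] by blast+
  then show thesis using that y by blast
qed

lemma dist_child_rep:
  assumes x: "x \<in> superlevel (real n)" and y: "y \<in> superlevel (real (Suc n))" and xy: "linked (real n) x y"
  shows "d (level_rep n x) (level_rep (Suc n) y) \<le> proj_bound + 1"
proof -
  define x0 r where "x0 = level_rep n x" and "r = level_rep (Suc n) y"
  have x0: "x0 \<in> X" "height x0 = real n" "linked (real n) x x0"
    using level_rep[OF x] superlevel_subset unfolding x0_def by auto
  have r: "r \<in> X" "height r = real (Suc n)" "linked (real (Suc n)) y r"
    using level_rep[OF y] superlevel_subset unfolding r_def by auto
  have "linked (real n) y r" using r(3) by (rule linked_mono[rotated]) simp
  then have "linked (real n) x0 r" using chain_sym[OF x0(3)] xy by (meson rtranclp_trans)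
  then have "d (ray x0 (real n)) (ray r (real n)) \<le> proj_bound"
    using dist_rays_linked[OF x0(1) r(1)] x0(2) r(2) by simp
  moreover have "ray x0 (real n) = x0" using ray_height[OF x0(1)] x0(2) by simp
  moreover have "d (ray r (real n)) r = 1" using dist_ray_end[OF r(1), of "real n"] r(2) by simp
  moreover have "d x0 r \<le> d x0 (ray r (real n)) + d (ray r (real n)) r"
    using M.triangle x0(1) r(1) ray_in_X[OF r(1), of "real n"] r(2) by simp
  ultimately show ?thesis unfolding x0_def r_def by simp
qed

lemma locally_finite_comp_tree:
  assumes lf: "locally_finite_graph V E"
  shows "locally_finite_graph comp_vertices CT.parent_edge"
  unfolding locally_finite_graph_def
proof
  fix a assume "a \<in> comp_vertices"
  then obtain n x where x: "x \<in> superlevel (real n)" and a: "a = comp_vertex n x"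
    unfolding comp_vertices_def by auto
  define x0 where "x0 = level_rep n x"
  have x0X: "x0 \<in> X" using level_rep[OF x] superlevel_subset unfolding x0_def by auto
  define R where "R = nat \<lceil>L * (proj_bound + 1) + C\<rceil>"
  define ball where "ball = {v \<in> V. gdist E (f x0) v \<le> R}"
  have "{w. CT.parent_edge a w} \<subseteq> {comp_parent a} \<union> (\<lambda>k. prod_encode (Suc n, k)) ` ball"
  proof
    fix w assume w: "w \<in> {w. CT.parent_edge a w}"
    show "w \<in> {comp_parent a} \<union> (\<lambda>k. prod_encode (Suc n, k)) ` ball"
    proof (cases "w = comp_parent a")
      case False
      then obtain y where y: "y \<in> superlevel (real (Suc n))" "linked (real n) x y"
          "w = comp_vertex (Suc n) y"
        using comp_child[OF x] w a by blast
      define r where "r = level_rep (Suc n) y"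
      have rX: "r \<in> X" using level_rep[OF y(1)] superlevel_subset unfolding r_def by auto
      have "real (gdist E (f x0) (f r)) \<le> L * d x0 r + C" using f_upper x0X rX by blast
      also have "\<dots> \<le> L * (proj_bound + 1) + C"
        using dist_child_rep[OF x y(1,2)] L_ge_1 unfolding x0_def r_def by simp
      finally have "gdist E (f x0) (f r) \<le> R" unfolding R_def by (simp add: le_nat_iff le_ceiling_iff)
      then have "f r \<in> ball" unfolding ball_def using f_in_V rX by simp
      moreover have "w = prod_encode (Suc n, f r)"
        using y(3) unfolding comp_vertex_def comp_label_def r_def by simp
      ultimately show ?thesis by blast
    qed simp
  qed
  moreover have "finite ball" unfolding ball_def using T.finite_gdist_ball[OF lf f_in_V[OF x0X]] .
  ultimately show "finite {w. CT.parent_edge a w}" by (simp add: finite_subset)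
qed

end

lemma quasi_isometry_to_tree_multiplicative_one:
  fixes X :: "'a set" and d :: "'a \<Rightarrow> 'a \<Rightarrow> real"
  assumes "geodesic_metric_space X d" and "1 \<le> L" "0 \<le> C" and tree: "simplicial_tree V E"
    and qi: "quasi_isometry L C X d (tree_points V E) (tree_dist E) f"
  obtains C' V' E' g where "0 \<le> C'" "simplicial_tree V' E'"
    "locally_finite_graph V E \<Longrightarrow> locally_finite_graph V' E'"
    "quasi_isometry 1 C' X d (tree_points V' E') (tree_dist E') g"
proof -
  interpret T: tree_graph V E by unfold_locales (rule tree)
  obtain v where "v \<in> V" using tree unfolding simplicial_tree_def by auto
  then have "(v, v, 0) \<in> tree_points V E" unfolding tree_points_def by auto
  then obtain base where base: "base \<in> X" using qi unfolding quasi_isometry_def by blast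
  interpret Q: coarse_tree_map X d V E L "C + 2" "\<lambda>x. fst (f x)" base
    using T.quasi_isometry_fst_bounds[OF qi] assms base by unfold_locales auto
  have "0 \<le> Q.proj_bound + 3" using Q.proj_bound_nonneg by simp
  then show thesis
    by (rule that[OF _ Q.CT.simplicial_tree_parent_edge Q.locally_finite_comp_tree Q.quasi_isometry_comp_tree])
qed

theorem corollary4p24:
  fixes X :: "'a set" and d :: "'a \<Rightarrow> 'a \<Rightarrow> real"
  assumes "geodesic_metric_space X d"
  shows "((\<exists>L C V E f. L \<ge> 1 \<and> C \<ge> 0 \<and> simplicial_tree V E \<and> countable V \<and>
            quasi_isometry L C X d (tree_points V E) (tree_dist E) f)
         \<longleftrightarrow> (\<exists>C' V E f. C' \<ge> 0 \<and> simplicial_tree V E \<and> countable V \<and>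
            quasi_isometry 1 C' X d (tree_points V E) (tree_dist E) f))
         \<and> ((\<exists>L C V E f. L \<ge> 1 \<and> C \<ge> 0 \<and> simplicial_tree V E \<and> locally_finite_graph V E \<and>
            quasi_isometry L C X d (tree_points V E) (tree_dist E) f)
         \<longleftrightarrow> (\<exists>C' V E f. C' \<ge> 0 \<and> simplicial_tree V E \<and> locally_finite_graph V E \<and>
            quasi_isometry 1 C' X d (tree_points V E) (tree_dist E) f))"
proof (intro conjI iffI)
  assume "\<exists>L C V E f. L \<ge> 1 \<and> C \<ge> 0 \<and> simplicial_tree V E \<and> countable V \<and>
    quasi_isometry L C X d (tree_points V E) (tree_dist E) f"
  then obtain L C V E f where "L \<ge> 1" "C \<ge> 0" "simplicial_tree V E"
    "quasi_isometry L C X d (tree_points V E) (tree_dist E) f" by blast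
  then obtain C' V' E' g where "C' \<ge> 0" "simplicial_tree V' E'"
    "quasi_isometry 1 C' X d (tree_points V' E') (tree_dist E') g"
    by (rule quasi_isometry_to_tree_multiplicative_one[OF assms])
  then show "\<exists>C' V E f. C' \<ge> 0 \<and> simplicial_tree V E \<and> countable V \<and>
    quasi_isometry 1 C' X d (tree_points V E) (tree_dist E) f"
    using countableI_type by blast
next
  assume "\<exists>L C V E f. L \<ge> 1 \<and> C \<ge> 0 \<and> simplicial_tree V E \<and> locally_finite_graph V E \<and>
    quasi_isometry L C X d (tree_points V E) (tree_dist E) f"
  then obtain L C V E f where "L \<ge> 1" "C \<ge> 0" "simplicial_tree V E" "locally_finite_graph V E"
    "quasi_isometry L C X d (tree_points V E) (tree_dist E) f" by blast
  then obtain C' V' E' g where "C' \<ge> 0" "simplicial_tree V' E'" "locally_finite_graph V' E'"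
    "quasi_isometry 1 C' X d (tree_points V' E') (tree_dist E') g"
    using quasi_isometry_to_tree_multiplicative_one[OF assms] by metis
  then show "\<exists>C' V E f. C' \<ge> 0 \<and> simplicial_tree V E \<and> locally_finite_graph V E \<and>
    quasi_isometry 1 C' X d (tree_points V E) (tree_dist E) f" by blast
qed (meson order_refl)+

end
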